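(* Let $J(P,Q)=\frac{D(P\|Q)+D(Q\|P)}{2}$ denote Jeffreys' divergence, with $P,Q$ ranging over pairs of probability distributions on a common countable set. Then (i) for every $\varepsilon\in[0,1)$, $\displaystyle\min_{P,Q:\ d_{\mathrm{TV}}(P,Q)=\varepsilon} J(P,Q)=\varepsilon\log\frac{1+\varepsilon}{1-\varepsilon}$, and this minimum is achieved by $P=\left(\frac{1-\varepsilon}{2},\frac{1+\varepsilon}{2}\right)$, $Q=\left(\frac{1+\varepsilon}{2},\frac{1-\varepsilon}{2}\right)$; (ii) for every $\varepsilon>0$, $\displaystyle\inf_{P,Q:\ D(P\|Q)=\varepsilon} J(P,Q)=\frac{\varepsilon}{2}$; (iii) the corresponding suprema, $\sup_{P,Q:\ d_{\mathrm{TV}}(P,Q)=\varepsilon}J(P,Q)$ for $\varepsilon\in(0,1)$ and $\sup_{P,Q:\ D(P\|Q)=\varepsilon}J(P,Q)$ for $\varepsilon>0$, are both $+\infty$.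
   Context: $d_{\mathrm{TV}}(P,Q)=\frac12\sum_x |P(x)-Q(x)|$; $D(P\|Q)=\sum_x P(x)\log\frac{P(x)}{Q(x)}$ is the relative entropy (possibly $+\infty$). Logarithms are natural. *)

theory Defs
  imports "HOL-Probability.Probability"
begin

definition dtv :: "'a pmf \<Rightarrow> 'a pmf \<Rightarrow> real" where
  "dtv P Q = (\<Sum>\<^sub>\<infinity>x. \<bar>pmf P x - pmf Q x\<bar>) / 2"

definition kl_term :: "'a pmf \<Rightarrow> 'a pmf \<Rightarrow> 'a \<Rightarrow> ereal" where
  "kl_term P Q x =
     (if pmf P x = 0 then 0
      else if pmf Q x = 0 then \<infinity>
      else ereal (pmf P x * ln (pmf P x / pmf Q x)))"

text \<open>Relative entropy D(P||Q) = sum over x of the summands, as an extended real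
  (possibly +infinity): sum of positive parts minus sum of negative parts
  (the latter is always finite).\<close>
definition kl_div :: "'a pmf \<Rightarrow> 'a pmf \<Rightarrow> ereal" where
  "kl_div P Q =
     enn2ereal (\<integral>\<^sup>+ x. e2ennreal (max 0 (kl_term P Q x)) \<partial>count_space UNIV)
   - enn2ereal (\<integral>\<^sup>+ x. e2ennreal (max 0 (- kl_term P Q x)) \<partial>count_space UNIV)"

definition jeffreys :: "'a pmf \<Rightarrow> 'a pmf \<Rightarrow> ereal" where
  "jeffreys P Q = (kl_div P Q + kl_div Q P) / 2"

definition two_point :: "'a \<Rightarrow> 'a \<Rightarrow> real \<Rightarrow> 'a pmf" where
  "two_point a b t = map_pmf (\<lambda>c. if c then b else a) (bernoulli_pmf t)"

end

theory Submission
  imports Defs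
begin

(* Lower bound in (i): for every r > 0 the symmetrised summand (p - q) log(p/q) dominates
   a linear function of p + q and |p - q| (a tangent line of the convex function
   (t - 1) log t at t = r or 1/r).  Summing, and choosing r = (1+e)/(1-e), gives
   J >= e log((1+e)/(1-e)) whenever d_TV = e; the symmetric two-point pair attains it.

   Everything else uses two-point distributions: (ii) follows from J >= D/2 together with
   pairs (p, d) with D = e, p -> 0 and small reverse divergence (found by the intermediate
   value theorem); (iii) uses pairs where one of the divergences is infinite. *)

lemma pmf_summable_on: "pmf P summable_on A"
  using pmf_abs_summable[of P A] abs_summable_equivalent summable_on_iff_abs_summable_on_real
  by blast

lemma infsum_pmf_UNIV: "(\<Sum>\<^sub>\<infinity>x. pmf P x) = 1"
  using infsetsum_infsum[OF pmf_abs_summable[of P UNIV]] infsetsum_pmf_eq_1[of P UNIV] by simp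

lemma summable_on_diff:
  fixes f g :: "'a \<Rightarrow> 'b::topological_ab_group_add"
  assumes "f summable_on A" "g summable_on A"
  shows "(\<lambda>x. f x - g x) summable_on A"
  using summable_on_add[OF assms(1) summable_on_uminus[THEN iffD2, OF assms(2)]] by simp

lemma infsum_diff:
  fixes f g :: "'a \<Rightarrow> 'b::{topological_ab_group_add, t2_space}"
  assumes "f summable_on A" "g summable_on A"
  shows "infsum (\<lambda>x. f x - g x) A = infsum f A - infsum g A"
  using infsum_add[OF assms(1) summable_on_uminus[THEN iffD2, OF assms(2)]]
    infsum_uminus[of g A] by simp

lemma summable_on_if_nn_integral_finite:
  fixes g :: "'a \<Rightarrow> real"
  assumes "\<And>x. g x \<ge> 0" "(\<integral>\<^sup>+x. ennreal (g x) \<partial>count_space UNIV) \<noteq> \<infinity>"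
  shows "g summable_on UNIV"
proof -
  have "(\<integral>\<^sup>+x. ennreal (norm (g x)) \<partial>count_space UNIV) = (\<integral>\<^sup>+x. ennreal (g x) \<partial>count_space UNIV)"
    using assms(1) by (intro nn_integral_cong) simp
  hence "integrable (count_space UNIV) g"
    using assms(2) by (intro integrableI_bounded) (auto simp: less_top)
  hence "Infinite_Set_Sum.abs_summable_on g UNIV"
    unfolding Infinite_Set_Sum.abs_summable_on_def .
  thus ?thesis
    using abs_summable_equivalent summable_on_iff_abs_summable_on_real by blast
qed

lemma nn_integral_eq_infsum:
  fixes g :: "'a \<Rightarrow> real"
  assumes "\<And>x. g x \<ge> 0" "g summable_on UNIV"
  shows "(\<integral>\<^sup>+x. ennreal (g x) \<partial>count_space UNIV) = ennreal (\<Sum>\<^sub>\<infinity>x. g x)"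
proof -
  have sm: "Infinite_Set_Sum.abs_summable_on g UNIV"
    using assms(2) summable_on_iff_abs_summable_on_real abs_summable_equivalent by blast
  show ?thesis
    using nn_integral_conv_infsetsum[OF sm assms(1)] infsetsum_infsum[OF sm] by simp
qed

section \<open>The relative entropy\<close>

definition kl_summand :: "real \<Rightarrow> real \<Rightarrow> real" where
  "kl_summand u v = (if u = 0 then 0 else u * ln (u / v))"

text \<open>Pointwise Gibbs inequality: the summand is at least u - v; this bounds the negative
  parts of the relative entropy and yields its nonnegativity.\<close>

lemma kl_summand_ge:
  assumes "0 \<le> u" "0 \<le> v" "v = 0 \<Longrightarrow> u = 0"
  shows "kl_summand u v \<ge> u - v"
proof (cases "u = 0")
  case True
  thus ?thesis using assms by (simp add: kl_summand_def)
next
  case False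
  hence u: "u > 0" and v: "v > 0" using assms by force+
  have "ln (v / u) \<le> v / u - 1" using u v by (intro ln_le_minus_one) simp
  hence "ln (u / v) \<ge> 1 - v / u" using u v by (simp add: ln_div)
  hence "u * ln (u / v) \<ge> u * (1 - v / u)" using u by (intro mult_left_mono) auto
  also have "u * (1 - v / u) = u - v" using u by (simp add: field_simps)
  finally show ?thesis using False by (simp add: kl_summand_def)
qed

lemma kl_term_eq_summand:
  assumes "pmf Q x = 0 \<Longrightarrow> pmf P x = 0"
  shows "kl_term P Q x = ereal (kl_summand (pmf P x) (pmf Q x))"
  using assms by (auto simp: kl_term_def kl_summand_def)

lemma kl_term_neg_le: "- kl_term P Q x \<le> ereal (pmf Q x)"
proof (cases "pmf P x = 0 \<or> pmf Q x = 0")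
  case False
  hence "kl_summand (pmf P x) (pmf Q x) \<ge> pmf P x - pmf Q x" by (intro kl_summand_ge) auto
  hence "- kl_summand (pmf P x) (pmf Q x) \<le> pmf Q x" using pmf_nonneg[of P x] by linarith
  moreover have "kl_term P Q x = ereal (kl_summand (pmf P x) (pmf Q x))"
    using False by (intro kl_term_eq_summand) auto
  ultimately show ?thesis by simp
qed (auto simp: kl_term_def)

lemma e2ennreal_max_0: "e2ennreal (max 0 (ereal r)) = ennreal (max 0 r)"
  by (simp only: ereal_max_0 e2ennreal_ereal)

lemma kl_neg_part_le_1:
  "(\<integral>\<^sup>+ x. e2ennreal (max 0 (- kl_term P Q x)) \<partial>count_space UNIV) \<le> 1"
proof -
  have "(\<integral>\<^sup>+ x. e2ennreal (max 0 (- kl_term P Q x)) \<partial>count_space UNIV)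
      \<le> (\<integral>\<^sup>+ x. ennreal (pmf Q x) \<partial>count_space UNIV)"
  proof (intro nn_integral_mono)
    fix x
    have "max 0 (- kl_term P Q x) \<le> ereal (pmf Q x)"
      using kl_term_neg_le[of P Q x] by simp
    from e2ennreal_mono[OF this]
    show "e2ennreal (max 0 (- kl_term P Q x)) \<le> ennreal (pmf Q x)" by simp
  qed
  also have "\<dots> = 1"
    unfolding nn_integral_pmf using measure_pmf.emeasure_space_1[of Q] by simp
  finally show ?thesis .
qed

lemma kl_neg_part_finite:
  "enn2ereal (\<integral>\<^sup>+ x. e2ennreal (max 0 (- kl_term P Q x)) \<partial>count_space UNIV) \<noteq> \<infinity>"
  using kl_neg_part_le_1[of P Q, unfolded less_eq_ennreal.rep_eq] by auto

lemma kl_div_eq_infinity: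
  assumes "pmf P x \<noteq> 0" "pmf Q x = 0"
  shows "kl_div P Q = \<infinity>"
proof -
  let ?g = "\<lambda>y. e2ennreal (max 0 (kl_term P Q y))"
  have "?g x * emeasure (count_space UNIV) {x} = (\<integral>\<^sup>+ y. ?g y * indicator {x} y \<partial>count_space UNIV)"
    by (rule nn_integral_indicator_singleton[symmetric]) simp
  also have "\<dots> \<le> (\<integral>\<^sup>+ y. ?g y \<partial>count_space UNIV)"
    by (intro nn_integral_mono) (simp split: split_indicator)
  finally have "(\<integral>\<^sup>+ y. ?g y \<partial>count_space UNIV) = \<infinity>"
    using assms by (simp add: kl_term_def top_unique)
  thus ?thesis using kl_neg_part_finite[of P Q] unfolding kl_div_def by simp
qed

lemma kl_div_eq_infsum:
  assumes ac: "\<And>x. pmf Q x = 0 \<Longrightarrow> pmf P x = 0"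
    and sm: "(\<lambda>x. kl_summand (pmf P x) (pmf Q x)) summable_on UNIV"
  shows "kl_div P Q = ereal (\<Sum>\<^sub>\<infinity>x. kl_summand (pmf P x) (pmf Q x))"
proof -
  define f where "f x = kl_summand (pmf P x) (pmf Q x)" for x
  have nf: "(\<lambda>x. norm (f x)) summable_on UNIV"
    using summable_on_iff_abs_summable_on_real[THEN iffD1, OF sm] unfolding f_def .
  have s1: "(\<lambda>x. max 0 (f x)) summable_on UNIV"
    by (rule summable_on_comparison_test[OF nf]) auto
  have s2: "(\<lambda>x. max 0 (- f x)) summable_on UNIV"
    by (rule summable_on_comparison_test[OF nf]) auto
  have "(\<integral>\<^sup>+ x. e2ennreal (max 0 (kl_term P Q x)) \<partial>count_space UNIV)
      = (\<integral>\<^sup>+ x. ennreal (max 0 (f x)) \<partial>count_space UNIV)"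
    by (intro nn_integral_cong) (simp only: kl_term_eq_summand[OF ac] f_def e2ennreal_max_0)
  also have "\<dots> = ennreal (\<Sum>\<^sub>\<infinity>x. max 0 (f x))"
    by (rule nn_integral_eq_infsum[OF _ s1]) simp
  finally have pos: "(\<integral>\<^sup>+ x. e2ennreal (max 0 (kl_term P Q x)) \<partial>count_space UNIV)
      = ennreal (\<Sum>\<^sub>\<infinity>x. max 0 (f x))" .
  have "(\<integral>\<^sup>+ x. e2ennreal (max 0 (- kl_term P Q x)) \<partial>count_space UNIV)
      = (\<integral>\<^sup>+ x. ennreal (max 0 (- f x)) \<partial>count_space UNIV)"
    by (intro nn_integral_cong)
      (simp only: kl_term_eq_summand[OF ac] f_def uminus_ereal.simps e2ennreal_max_0)
  also have "\<dots> = ennreal (\<Sum>\<^sub>\<infinity>x. max 0 (- f x))"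
    by (rule nn_integral_eq_infsum[OF _ s2]) simp
  finally have neg: "(\<integral>\<^sup>+ x. e2ennreal (max 0 (- kl_term P Q x)) \<partial>count_space UNIV)
      = ennreal (\<Sum>\<^sub>\<infinity>x. max 0 (- f x))" .
  have "kl_div P Q = ereal ((\<Sum>\<^sub>\<infinity>x. max 0 (f x)) - (\<Sum>\<^sub>\<infinity>x. max 0 (- f x)))"
    unfolding kl_div_def pos neg by (simp add: infsum_nonneg)
  also have "\<dots> = ereal (\<Sum>\<^sub>\<infinity>x. max 0 (f x) - max 0 (- f x))"
    by (simp add: infsum_diff[OF s1 s2])
  also have "(\<lambda>x. max 0 (f x) - max 0 (- f x)) = f" by (auto simp: max_def)
  finally show ?thesis unfolding f_def .
qed

lemma kl_div_finite:
  assumes "kl_div P Q \<noteq> \<infinity>"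
  shows "(\<forall>x. pmf Q x = 0 \<longrightarrow> pmf P x = 0)"
    and "(\<lambda>x. kl_summand (pmf P x) (pmf Q x)) summable_on UNIV"
    and "kl_div P Q = ereal (\<Sum>\<^sub>\<infinity>x. kl_summand (pmf P x) (pmf Q x))"
proof -
  show ac: "\<forall>x. pmf Q x = 0 \<longrightarrow> pmf P x = 0"
    using kl_div_eq_infinity[of P _ Q] assms by blast
  define f where "f x = kl_summand (pmf P x) (pmf Q x)" for x
  have "(\<integral>\<^sup>+ x. e2ennreal (max 0 (kl_term P Q x)) \<partial>count_space UNIV) \<noteq> \<infinity>"
    using assms kl_neg_part_finite[of P Q] unfolding kl_div_def by auto
  moreover have "(\<integral>\<^sup>+ x. e2ennreal (max 0 (kl_term P Q x)) \<partial>count_space UNIV)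
      = (\<integral>\<^sup>+ x. ennreal (max 0 (f x)) \<partial>count_space UNIV)"
    using ac by (intro nn_integral_cong) (simp only: kl_term_eq_summand f_def e2ennreal_max_0)
  ultimately have s1: "(\<lambda>x. max 0 (f x)) summable_on UNIV"
    by (intro summable_on_if_nn_integral_finite) auto
  have s2: "(\<lambda>x. max 0 (- f x)) summable_on UNIV"
  proof (rule summable_on_comparison_test[OF pmf_summable_on[of Q]])
    fix x
    have "f x \<ge> pmf P x - pmf Q x" unfolding f_def using ac by (intro kl_summand_ge) auto
    thus "max 0 (- f x) \<le> pmf Q x" using pmf_nonneg[of P x] pmf_nonneg[of Q x] by linarith
  qed simp
  have "(\<lambda>x. max 0 (f x) - max 0 (- f x)) summable_on UNIV"
    by (rule summable_on_diff[OF s1 s2])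
  also have "(\<lambda>x. max 0 (f x) - max 0 (- f x)) = f" by (auto simp: max_def)
  finally show sm: "(\<lambda>x. kl_summand (pmf P x) (pmf Q x)) summable_on UNIV" unfolding f_def .
  show "kl_div P Q = ereal (\<Sum>\<^sub>\<infinity>x. kl_summand (pmf P x) (pmf Q x))"
    using ac sm by (intro kl_div_eq_infsum) auto
qed

text \<open>Gibbs' inequality: D(P||Q) >= 0, by summing the pointwise bound u log(u/v) >= u - v.\<close>

lemma kl_div_nonneg: "kl_div P Q \<ge> 0"
proof (cases "kl_div P Q = \<infinity>")
  case False
  have "0 = (\<Sum>\<^sub>\<infinity>x. pmf P x - pmf Q x)"
    using infsum_diff[OF pmf_summable_on[of P] pmf_summable_on[of Q]] infsum_pmf_UNIV[of P]
      infsum_pmf_UNIV[of Q] by simp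
  also have "\<dots> \<le> (\<Sum>\<^sub>\<infinity>x. kl_summand (pmf P x) (pmf Q x))"
    using kl_div_finite[OF False]
    by (intro infsum_mono summable_on_diff kl_summand_ge pmf_summable_on) auto
  finally show ?thesis using kl_div_finite(3)[OF False] by simp
qed simp

text \<open>Since both divergences are nonnegative, J is infinite as soon as one of them is,
  and J >= D/2 always.\<close>

lemma jeffreys_eq_infinity:
  assumes "kl_div P Q = \<infinity> \<or> kl_div Q P = \<infinity>"
  shows "jeffreys P Q = \<infinity>"
  using assms kl_div_nonneg[of P Q] kl_div_nonneg[of Q P] unfolding jeffreys_def
  by (auto simp: ereal_divide_eq)

lemma jeffreys_ge_half_kl: "jeffreys P Q \<ge> kl_div P Q / 2"
proof -
  have "kl_div P Q + 0 \<le> kl_div P Q + kl_div Q P"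
    using kl_div_nonneg[of Q P] by (intro add_left_mono) auto
  thus ?thesis unfolding jeffreys_def by (intro ereal_divide_right_mono) auto
qed

lemma jeffreys_eq_infsum:
  assumes "kl_div P Q \<noteq> \<infinity>" "kl_div Q P \<noteq> \<infinity>"
  defines "g \<equiv> \<lambda>x. kl_summand (pmf P x) (pmf Q x) + kl_summand (pmf Q x) (pmf P x)"
  shows "g summable_on UNIV" "jeffreys P Q = ereal ((\<Sum>\<^sub>\<infinity>x. g x) / 2)"
proof -
  note PQ = kl_div_finite[OF assms(1)] and QP = kl_div_finite[OF assms(2)]
  show "g summable_on UNIV" unfolding g_def using PQ(2) QP(2) by (rule summable_on_add)
  show "jeffreys P Q = ereal ((\<Sum>\<^sub>\<infinity>x. g x) / 2)"
    unfolding jeffreys_def PQ(3) QP(3) g_def by (simp add: infsum_add[OF PQ(2) QP(2)])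
qed

section \<open>Two-point distributions\<close>

lemma pmf_two_point:
  assumes "a \<noteq> b" "0 \<le> t" "t \<le> 1"
  shows "pmf (two_point a b t) x = (if x = b then t else if x = a then 1 - t else 0)"
proof -
  have "pmf (two_point a b t) x = measure (bernoulli_pmf t) ((\<lambda>c. if c then b else a) -` {x})"
    unfolding two_point_def by (rule pmf_map)
  also have "(\<lambda>c. if c then b else a) -` {x} = (if x = b then {True} else if x = a then {False} else {})"
    using assms(1) by (auto split: if_splits)
  finally show ?thesis using assms by (auto simp: measure_pmf_single)
qed

lemma infsum_two_support:
  fixes f :: "'a \<Rightarrow> real"
  assumes "a \<noteq> b" "\<And>x. x \<noteq> a \<Longrightarrow> x \<noteq> b \<Longrightarrow> f x = 0"
  shows "f summable_on UNIV" "(\<Sum>\<^sub>\<infinity>x. f x) = f a + f b"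
proof -
  have "f summable_on UNIV \<longleftrightarrow> f summable_on {a, b}"
    by (rule summable_on_cong_neutral) (use assms in auto)
  thus "f summable_on UNIV" by simp
  have "(\<Sum>\<^sub>\<infinity>x. f x) = infsum f {a, b}"
    by (rule infsum_cong_neutral) (use assms in auto)
  thus "(\<Sum>\<^sub>\<infinity>x. f x) = f a + f b" using assms(1) by simp
qed

lemma kl_div_two_point:
  assumes ab: "a \<noteq> b" and s: "0 \<le> s" "s \<le> 1" and t: "0 < t" "t < 1"
  shows "kl_div (two_point a b s) (two_point a b t) = ereal (kl_summand s t + kl_summand (1 - s) (1 - t))"
proof -
  let ?P = "two_point a b s" and ?Q = "two_point a b t"
  have pP: "pmf ?P x = (if x = b then s else if x = a then 1 - s else 0)" for x
    using pmf_two_point[OF ab s] .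
  have pQ: "pmf ?Q x = (if x = b then t else if x = a then 1 - t else 0)" for x
    using pmf_two_point[OF ab] t by simp
  have ac: "pmf ?Q x = 0 \<Longrightarrow> pmf ?P x = 0" for x
    using t unfolding pP pQ by (auto split: if_splits)
  have supp: "kl_summand (pmf ?P x) (pmf ?Q x) = 0" if "x \<noteq> a" "x \<noteq> b" for x
    using that unfolding pP pQ by (simp add: kl_summand_def)
  show ?thesis
    using kl_div_eq_infsum[OF ac infsum_two_support(1)[OF ab supp]]
      infsum_two_support(2)[OF ab supp] ab
    by (simp add: pP pQ)
qed

lemma dtv_two_point:
  assumes ab: "a \<noteq> b" and "0 \<le> s" "s \<le> 1" "0 \<le> t" "t \<le> 1"
  shows "dtv (two_point a b s) (two_point a b t) = \<bar>s - t\<bar>"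
proof -
  let ?P = "two_point a b s" and ?Q = "two_point a b t"
  have pP: "pmf ?P x = (if x = b then s else if x = a then 1 - s else 0)" for x
    using pmf_two_point[OF ab] assms by simp
  have pQ: "pmf ?Q x = (if x = b then t else if x = a then 1 - t else 0)" for x
    using pmf_two_point[OF ab] assms by simp
  have "\<bar>pmf ?P x - pmf ?Q x\<bar> = 0" if "x \<noteq> a" "x \<noteq> b" for x
    using that unfolding pP pQ by simp
  from infsum_two_support(2)[OF ab this]
  show ?thesis using ab unfolding dtv_def pP pQ by simp
qed

text \<open>A point mass against a non-degenerate two-point distribution: the reverse divergence
  is infinite, hence so is J.\<close>

lemma jeffreys_two_point_degenerate:
  assumes ab: "a \<noteq> b" and t: "0 < t" "t < 1"
  shows "jeffreys (two_point a b 0) (two_point a b t) = \<infinity>"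
proof -
  have "kl_div (two_point a b t) (two_point a b 0) = \<infinity>"
    by (rule kl_div_eq_infinity[of _ b]) (use pmf_two_point[OF ab] t in simp_all)
  thus ?thesis by (intro jeffreys_eq_infinity) simp
qed

section \<open>Jeffreys' divergence versus total variation: the lower bound\<close>

text \<open>The function (t - 1) log t is convex on t > 0; this is its tangent line at t = r.\<close>

lemma tangent_line_bound:
  fixes t r :: real
  assumes t: "t > 0" and r: "r > 0"
  shows "(t - 1) * ln t \<ge> (ln r + 1 - 1 / r) * t + (- ln r + 1 - r)"
proof -
  have key: "(t - 1) * (ln t - ln r) \<ge> (t - r) * (r - 1) / r"
  proof (cases "t \<ge> 1")
    case True
    have "ln (r / t) \<le> r / t - 1" using t r by (intro ln_le_minus_one) simp
    hence "ln t - ln r \<ge> 1 - r / t" using t r by (simp add: ln_div)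
    hence "(t - 1) * (ln t - ln r) \<ge> (t - 1) * (1 - r / t)" using True by (intro mult_left_mono) auto
    moreover have "(t - 1) * (1 - r / t) - (t - r) * (r - 1) / r = (t - r)\<^sup>2 / (r * t)"
      using t r by (simp add: field_simps power2_eq_square)
    moreover have "(t - r)\<^sup>2 / (r * t) \<ge> 0" using t r by simp
    ultimately show ?thesis by linarith
  next
    case False
    have "ln (t / r) \<le> t / r - 1" using t r by (intro ln_le_minus_one) simp
    hence "ln t - ln r \<le> t / r - 1" using t r by (simp add: ln_div)
    hence "(t - 1) * (ln t - ln r) \<ge> (t - 1) * (t / r - 1)" using False
      by (intro mult_left_mono_neg) auto
    moreover have "(t - 1) * (t / r - 1) - (t - r) * (r - 1) / r = (t - r)\<^sup>2 / r"
      using t r by (simp add: field_simps power2_eq_square)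
    moreover have "(t - r)\<^sup>2 / r \<ge> 0" using t r by simp
    ultimately show ?thesis by linarith
  qed
  have "(ln r + 1 - 1 / r) * t + (- ln r + 1 - r) = (t - 1) * ln r + (t - r) * (r - 1) / r"
    using r by (simp add: field_simps)
  thus ?thesis using key by (simp add: algebra_simps)
qed

text \<open>Pointwise linear lower bound for the symmetrised summand (p - q) log(p/q): the
  tangent at r is used when p >= q and the tangent at 1/r when p < q, with t = p/q.\<close>

lemma symmetric_summand_lower_bound:
  fixes p q r :: real
  assumes p: "p \<ge> 0" and q: "q \<ge> 0" and pq: "p = 0 \<longleftrightarrow> q = 0" and r: "r > 0"
  shows "kl_summand p q + kl_summand q p
           \<ge> (2 - r - 1 / r) / 2 * (p + q) + (ln r + (r - 1 / r) / 2) * \<bar>p - q\<bar>"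
proof (cases "p = 0")
  case True
  thus ?thesis using pq by (simp add: kl_summand_def)
next
  case False
  hence p: "p > 0" and q: "q > 0" using p q pq by auto
  define t where "t = p / q"
  have t: "t > 0" using p q by (simp add: t_def)
  have sym: "kl_summand p q + kl_summand q p = q * ((t - 1) * ln t)"
    using p q unfolding kl_summand_def t_def by (simp add: ln_div field_simps)
  show ?thesis
  proof (cases "p \<ge> q")
    case True
    have "(2 - r - 1 / r) / 2 * (p + q) + (ln r + (r - 1 / r) / 2) * \<bar>p - q\<bar>
        = q * ((ln r + 1 - 1 / r) * t + (- ln r + 1 - r))"
      using True q r unfolding t_def by (simp add: field_simps)
    thus ?thesis using tangent_line_bound[OF t r] q sym by (simp add: mult_left_mono)
  next
    case False
    have r': "1 / r > 0" and ln_inv: "ln (1 / r) = - ln r" using r by (simp_all add: ln_div)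
    have "(2 - r - 1 / r) / 2 * (p + q) + (ln r + (r - 1 / r) / 2) * \<bar>p - q\<bar>
        = q * ((ln (1 / r) + 1 - 1 / (1 / r)) * t + (- ln (1 / r) + 1 - 1 / r))"
      using False q r unfolding t_def ln_inv by (simp add: field_simps)
    thus ?thesis using tangent_line_bound[OF t r'] q sym by (simp add: mult_left_mono)
  qed
qed

lemma summable_abs_pmf_diff: "(\<lambda>x. \<bar>pmf P x - pmf Q x\<bar>) summable_on UNIV"
  by (rule summable_on_comparison_test[OF summable_on_add[OF pmf_summable_on[of P] pmf_summable_on[of Q]]])
    (simp_all add: abs_le_iff)

lemma jeffreys_sum_lower_bound:
  assumes fin: "kl_div P Q \<noteq> \<infinity>" "kl_div Q P \<noteq> \<infinity>" and r: "r > 0"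
  shows "(\<Sum>\<^sub>\<infinity>x. kl_summand (pmf P x) (pmf Q x) + kl_summand (pmf Q x) (pmf P x))
           \<ge> (2 - r - 1 / r) + (2 * ln r + r - 1 / r) * dtv P Q"
proof -
  define c1 where "c1 = (2 - r - 1 / r) / 2"
  define c2 where "c2 = ln r + (r - 1 / r) / 2"
  define lin where "lin x = c1 * (pmf P x + pmf Q x) + c2 * \<bar>pmf P x - pmf Q x\<bar>" for x
  have sPQ: "(\<lambda>x. pmf P x + pmf Q x) summable_on UNIV"
    by (intro summable_on_add pmf_summable_on)
  have "(\<Sum>\<^sub>\<infinity>x. lin x) = c1 * (\<Sum>\<^sub>\<infinity>x. pmf P x + pmf Q x) + c2 * (\<Sum>\<^sub>\<infinity>x. \<bar>pmf P x - pmf Q x\<bar>)"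
    unfolding lin_def
    by (simp add: infsum_add summable_on_cmult_right sPQ summable_abs_pmf_diff infsum_cmult_right)
  also have "(\<Sum>\<^sub>\<infinity>x. pmf P x + pmf Q x) = 2"
    by (simp add: infsum_add pmf_summable_on infsum_pmf_UNIV)
  also have "(\<Sum>\<^sub>\<infinity>x. \<bar>pmf P x - pmf Q x\<bar>) = 2 * dtv P Q"
    by (simp add: dtv_def)
  also have "c1 * 2 + c2 * (2 * dtv P Q) = (2 - r - 1 / r) + (2 * ln r + r - 1 / r) * dtv P Q"
    using r by (simp add: c1_def c2_def field_simps)
  finally have "(\<Sum>\<^sub>\<infinity>x. lin x) = (2 - r - 1 / r) + (2 * ln r + r - 1 / r) * dtv P Q" .
  moreover have "(\<Sum>\<^sub>\<infinity>x. lin x)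
      \<le> (\<Sum>\<^sub>\<infinity>x. kl_summand (pmf P x) (pmf Q x) + kl_summand (pmf Q x) (pmf P x))"
  proof (rule infsum_mono)
    show "lin summable_on UNIV" unfolding lin_def
      by (intro summable_on_add summable_on_cmult_right sPQ summable_abs_pmf_diff)
    show "(\<lambda>x. kl_summand (pmf P x) (pmf Q x) + kl_summand (pmf Q x) (pmf P x)) summable_on UNIV"
      by (rule jeffreys_eq_infsum(1)[OF fin])
    show "lin x \<le> kl_summand (pmf P x) (pmf Q x) + kl_summand (pmf Q x) (pmf P x)" for x
      unfolding lin_def c1_def c2_def using kl_div_finite(1)[OF fin(1)] kl_div_finite(1)[OF fin(2)]
      by (intro symmetric_summand_lower_bound r) auto
  qed
  ultimately show ?thesis by simp
qed

text \<open>The lower bound of part (i): choose r = (1 + e)/(1 - e), which makes the constant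
  and the coefficient of d_TV combine to 2 e log r.\<close>

lemma jeffreys_dtv_lower_bound:
  assumes e: "dtv P Q = \<epsilon>" "\<epsilon> < 1"
  shows "jeffreys P Q \<ge> ereal (\<epsilon> * ln ((1 + \<epsilon>) / (1 - \<epsilon>)))"
proof (cases "kl_div P Q = \<infinity> \<or> kl_div Q P = \<infinity>")
  case True
  thus ?thesis using jeffreys_eq_infinity[OF True] by simp
next
  case False
  hence fin: "kl_div P Q \<noteq> \<infinity>" "kl_div Q P \<noteq> \<infinity>" by auto
  have "dtv P Q \<ge> 0" unfolding dtv_def by (simp add: infsum_nonneg)
  hence e0: "\<epsilon> \<ge> 0" using e(1) by simp
  define r where "r = (1 + \<epsilon>) / (1 - \<epsilon>)"
  have r: "r > 0" using e e0 by (simp add: r_def)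
  have "r * (1 - \<epsilon>) = 1 + \<epsilon>" "(1 / r) * (1 + \<epsilon>) = 1 - \<epsilon>"
    using e e0 unfolding r_def by (simp_all add: field_simps)
  moreover have "(2 - r - 1 / r) + (2 * ln r + r - 1 / r) * \<epsilon>
      = 2 - r * (1 - \<epsilon>) - (1 / r) * (1 + \<epsilon>) + 2 * (\<epsilon> * ln r)"
    by (simp add: algebra_simps add_divide_distrib)
  ultimately have "(2 - r - 1 / r) + (2 * ln r + r - 1 / r) * \<epsilon> = 2 * (\<epsilon> * ln r)"
    by simp
  hence "2 * (\<epsilon> * ln r)
      \<le> (\<Sum>\<^sub>\<infinity>x. kl_summand (pmf P x) (pmf Q x) + kl_summand (pmf Q x) (pmf P x))"
    using jeffreys_sum_lower_bound[OF fin r] e(1) by simp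
  thus ?thesis using jeffreys_eq_infsum(2)[OF fin] unfolding r_def by simp
qed

section \<open>Part (i): the minimum under a total variation constraint\<close>

lemma symmetric_pair:
  assumes ab: "a \<noteq> b" and e: "0 \<le> \<epsilon>" "\<epsilon> < 1"
  defines "P \<equiv> two_point a b ((1 + \<epsilon>) / 2)" and "Q \<equiv> two_point a b ((1 - \<epsilon>) / 2)"
  shows "dtv P Q = \<epsilon>" "jeffreys P Q = ereal (\<epsilon> * ln ((1 + \<epsilon>) / (1 - \<epsilon>)))"
proof -
  define s where "s = (1 + \<epsilon>) / 2"
  define t where "t = (1 - \<epsilon>) / 2"
  have st: "0 < s" "s < 1" "0 < t" "t < 1" "1 - s = t" "1 - t = s" "s - t = \<epsilon>"
    using e by (simp_all add: s_def t_def field_simps)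
  show "dtv P Q = \<epsilon>"
    using dtv_two_point[OF ab, of s t] st e unfolding P_def Q_def s_def[symmetric] t_def[symmetric]
    by simp
  have "kl_summand s t + kl_summand t s = (s - t) * ln (s / t)"
    using st by (simp add: kl_summand_def ln_div algebra_simps)
  also have "s / t = (1 + \<epsilon>) / (1 - \<epsilon>)" using e by (simp add: s_def t_def field_simps)
  finally have sum: "kl_summand s t + kl_summand t s = \<epsilon> * ln ((1 + \<epsilon>) / (1 - \<epsilon>))"
    using st by simp
  have "kl_div P Q = ereal (\<epsilon> * ln ((1 + \<epsilon>) / (1 - \<epsilon>)))"
       "kl_div Q P = ereal (\<epsilon> * ln ((1 + \<epsilon>) / (1 - \<epsilon>)))"
    using kl_div_two_point[OF ab, of s t] kl_div_two_point[OF ab, of t s] st sum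
    unfolding P_def Q_def s_def[symmetric] t_def[symmetric] by (simp_all add: add.commute)
  thus "jeffreys P Q = ereal (\<epsilon> * ln ((1 + \<epsilon>) / (1 - \<epsilon>)))"
    unfolding jeffreys_def by simp
qed

lemma jeffreys_dtv_minimum:
  fixes a b :: "'a :: countable"
  assumes ab: "a \<noteq> b" and e: "0 \<le> \<epsilon>" "\<epsilon> < 1"
  shows "Inf {jeffreys P Q | P Q :: 'a pmf. dtv P Q = \<epsilon>} = ereal (\<epsilon> * ln ((1 + \<epsilon>) / (1 - \<epsilon>)))"
proof (rule antisym)
  show "Inf {jeffreys P Q | P Q :: 'a pmf. dtv P Q = \<epsilon>} \<le> ereal (\<epsilon> * ln ((1 + \<epsilon>) / (1 - \<epsilon>)))"
    using symmetric_pair[OF ab e] by (intro Inf_lower2) auto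
  show "ereal (\<epsilon> * ln ((1 + \<epsilon>) / (1 - \<epsilon>))) \<le> Inf {jeffreys P Q | P Q :: 'a pmf. dtv P Q = \<epsilon>}"
    using jeffreys_dtv_lower_bound e by (intro Inf_greatest) auto
qed

section \<open>Part (ii): the infimum under a relative entropy constraint\<close>

text \<open>For 0 < p < 1 there is a two-point Q = (d) with d <= p such that D(P||Q) = e for
  P = (p): the divergence decreases continuously from a value >= e (at d = d0) to 0 (at d = p).\<close>

lemma kl_two_point_solution:
  assumes e: "0 < \<epsilon>" and p: "0 < p" "p < 1"
  shows "\<exists>d. 0 < d \<and> d \<le> p \<and> kl_summand p d + kl_summand (1 - p) (1 - d) = \<epsilon>"
proof -
  define F where "F d = p * ln (p / d) + (1 - p) * ln ((1 - p) / (1 - d))" for d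
  define d0 where "d0 = p * exp (- (\<epsilon> - (1 - p) * ln (1 - p)) / p)"
  have "(1 - p) * ln (1 - p) < 0" using p by (simp add: mult_pos_neg)
  hence "\<epsilon> - (1 - p) * ln (1 - p) > 0" using e by linarith
  hence "exp (- (\<epsilon> - (1 - p) * ln (1 - p)) / p) < 1" using p by (simp add: divide_neg_pos)
  hence d0: "0 < d0" "d0 < p" using p unfolding d0_def by auto
  have "p * ln (p / d0) = \<epsilon> - (1 - p) * ln (1 - p)"
    using p unfolding d0_def by (simp add: ln_div ln_mult)
  moreover have "ln ((1 - p) / (1 - d0)) \<ge> ln (1 - p)"
    using d0 p by (simp add: le_divide_eq mult_le_cancel_left1)
  ultimately have "F d0 \<ge> \<epsilon>" using p unfolding F_def by (simp add: mult_left_mono)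
  moreover have "F p \<le> \<epsilon>" using p e unfolding F_def by simp
  moreover have "continuous_on {d0..p} F"
    unfolding F_def using d0 p by (intro continuous_intros) auto
  ultimately obtain d where d: "d0 \<le> d" "d \<le> p" "F d = \<epsilon>"
    using IVT2'[of F p \<epsilon> d0] d0 by auto
  thus ?thesis using d0 p unfolding F_def kl_summand_def by (intro exI[of _ d]) auto
qed

lemma kl_two_point_reverse_small:
  assumes d: "0 < d" "d \<le> p" and p: "p \<le> 1/2"
  shows "kl_summand d p + kl_summand (1 - d) (1 - p) \<le> 2 * p"
proof -
  have "ln (d / p) \<le> 0" using d by simp
  hence b1: "kl_summand d p \<le> 0"
    unfolding kl_summand_def using d by (simp add: mult_nonneg_nonpos)
  have "ln ((1 - d) / (1 - p)) \<le> (1 - d) / (1 - p) - 1"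
    using d p by (intro ln_le_minus_one) simp
  also have "(1 - d) / (1 - p) - 1 = (p - d) / (1 - p)" using p by (simp add: field_simps)
  finally have "(1 - d) * ln ((1 - d) / (1 - p)) \<le> (1 - d) * ((p - d) / (1 - p))"
    using d p by (intro mult_left_mono) auto
  also have "\<dots> \<le> 1 * (p / (1 - p))"
    using d p by (intro mult_mono divide_right_mono) auto
  also have "p / (1 - p) \<le> 2 * p" using d p by (simp add: divide_le_eq algebra_simps)
  finally show ?thesis using b1 d p unfolding kl_summand_def by simp
qed

lemma jeffreys_kl_near_half:
  fixes a b :: "'a :: countable"
  assumes ab: "a \<noteq> b" and e: "0 < \<epsilon>" and p: "0 < p" "p \<le> 1/2"
  shows "\<exists>P Q :: 'a pmf. kl_div P Q = ereal \<epsilon> \<and> jeffreys P Q \<le> ereal (\<epsilon> / 2 + p)"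
proof -
  obtain d where d: "0 < d" "d \<le> p" and F: "kl_summand p d + kl_summand (1 - p) (1 - d) = \<epsilon>"
    using kl_two_point_solution[OF e p(1)] p by auto
  let ?P = "two_point a b p" and ?Q = "two_point a b d"
  have k1: "kl_div ?P ?Q = ereal \<epsilon>"
    using kl_div_two_point[OF ab, of p d] d p F by simp
  have k2: "kl_div ?Q ?P = ereal (kl_summand d p + kl_summand (1 - d) (1 - p))"
    using kl_div_two_point[OF ab, of d p] d p by simp
  have "jeffreys ?P ?Q \<le> ereal (\<epsilon> / 2 + p)"
    using kl_two_point_reverse_small[OF d p(2)] unfolding jeffreys_def k1 k2 by simp
  thus ?thesis using k1 by blast
qed

text \<open>Part (ii): J >= D/2 gives the lower bound; the pairs above approach it.\<close>

lemma jeffreys_kl_infimum: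
  fixes a b :: "'a :: countable"
  assumes ab: "a \<noteq> b" and e: "0 < \<epsilon>"
  shows "Inf {jeffreys P Q | P Q :: 'a pmf. kl_div P Q = ereal \<epsilon>} = ereal (\<epsilon> / 2)"
proof (rule antisym)
  show "ereal (\<epsilon> / 2) \<le> Inf {jeffreys P Q | P Q :: 'a pmf. kl_div P Q = ereal \<epsilon>}"
  proof (rule Inf_greatest)
    fix y
    assume "y \<in> {jeffreys P Q | P Q :: 'a pmf. kl_div P Q = ereal \<epsilon>}"
    then obtain P Q :: "'a pmf" where "y = jeffreys P Q" "kl_div P Q = ereal \<epsilon>" by blast
    thus "ereal (\<epsilon> / 2) \<le> y" using jeffreys_ge_half_kl[of P Q] by simp
  qed
  show "Inf {jeffreys P Q | P Q :: 'a pmf. kl_div P Q = ereal \<epsilon>} \<le> ereal (\<epsilon> / 2)"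
  proof (rule ereal_le_epsilon2)
    fix \<eta> :: real
    assume "0 < \<eta>"
    hence "0 < min (1/2) \<eta>" "min (1/2) \<eta> \<le> 1/2" by auto
    then obtain P Q :: "'a pmf"
      where PQ: "kl_div P Q = ereal \<epsilon>" "jeffreys P Q \<le> ereal (\<epsilon> / 2 + min (1/2) \<eta>)"
      using jeffreys_kl_near_half[OF ab e] by blast
    have "Inf {jeffreys P Q | P Q :: 'a pmf. kl_div P Q = ereal \<epsilon>} \<le> jeffreys P Q"
      using PQ(1) by (intro Inf_lower) blast
    also have "\<dots> \<le> ereal (\<epsilon> / 2) + ereal \<eta>" using PQ(2) by (simp add: order_trans)
    finally show "Inf {jeffreys P Q | P Q :: 'a pmf. kl_div P Q = ereal \<epsilon>} \<le> ereal (\<epsilon> / 2) + ereal \<eta>" .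
  qed
qed

section \<open>Part (iii): the suprema are infinite\<close>

text \<open>The pair ((0), (e)) has d_TV = e and infinite J.\<close>

lemma jeffreys_dtv_unbounded:
  fixes a b :: "'a :: countable"
  assumes ab: "a \<noteq> b" and e: "0 < \<epsilon>" "\<epsilon> < 1"
  shows "Sup {jeffreys P Q | P Q :: 'a pmf. dtv P Q = \<epsilon>} = \<infinity>"
proof -
  have "dtv (two_point a b 0) (two_point a b \<epsilon>) = \<epsilon>"
    using dtv_two_point[OF ab] e by simp
  hence "jeffreys (two_point a b 0) (two_point a b \<epsilon>) \<le> Sup {jeffreys P Q | P Q :: 'a pmf. dtv P Q = \<epsilon>}"
    by (intro Sup_upper) blast
  thus ?thesis using jeffreys_two_point_degenerate[OF ab e] by (simp add: top_unique)
qed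

text \<open>D((0)||(t)) = -log(1 - t), so t = 1 - exp(-e) gives D = e with infinite reverse divergence.\<close>

lemma jeffreys_kl_unbounded:
  fixes a b :: "'a :: countable"
  assumes ab: "a \<noteq> b" and e: "0 < \<epsilon>"
  shows "Sup {jeffreys P Q | P Q :: 'a pmf. kl_div P Q = ereal \<epsilon>} = \<infinity>"
proof -
  define t where "t = 1 - exp (- \<epsilon>)"
  have t: "0 < t" "t < 1" using e by (auto simp: t_def)
  have "kl_div (two_point a b 0) (two_point a b t) = ereal \<epsilon>"
    using kl_div_two_point[OF ab _ _ t] by (simp add: kl_summand_def t_def ln_div)
  hence "jeffreys (two_point a b 0) (two_point a b t) \<le> Sup {jeffreys P Q | P Q :: 'a pmf. kl_div P Q = ereal \<epsilon>}"
    by (intro Sup_upper) blast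
  thus ?thesis using jeffreys_two_point_degenerate[OF ab t] by (simp add: top_unique)
qed

theorem proposition4:
  fixes a b :: "'a :: countable"
  assumes ab: "a \<noteq> b"
  shows
    "(\<forall>\<epsilon>::real. 0 \<le> \<epsilon> \<and> \<epsilon> < 1 \<longrightarrow>
        Inf {jeffreys P Q | P Q :: 'a pmf. dtv P Q = \<epsilon>}
          = ereal (\<epsilon> * ln ((1 + \<epsilon>) / (1 - \<epsilon>)))
      \<and> dtv (two_point a b ((1 + \<epsilon>) / 2)) (two_point a b ((1 - \<epsilon>) / 2)) = \<epsilon>
      \<and> jeffreys (two_point a b ((1 + \<epsilon>) / 2)) (two_point a b ((1 - \<epsilon>) / 2))
          = ereal (\<epsilon> * ln ((1 + \<epsilon>) / (1 - \<epsilon>))))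
   \<and> (\<forall>\<epsilon>::real. 0 < \<epsilon> \<longrightarrow>
        Inf {jeffreys P Q | P Q :: 'a pmf. kl_div P Q = ereal \<epsilon>} = ereal (\<epsilon> / 2))
   \<and> (\<forall>\<epsilon>::real. 0 < \<epsilon> \<and> \<epsilon> < 1 \<longrightarrow>
        Sup {jeffreys P Q | P Q :: 'a pmf. dtv P Q = \<epsilon>} = \<infinity>)
   \<and> (\<forall>\<epsilon>::real. 0 < \<epsilon> \<longrightarrow>
        Sup {jeffreys P Q | P Q :: 'a pmf. kl_div P Q = ereal \<epsilon>} = \<infinity>)"
  using jeffreys_dtv_minimum[OF ab] symmetric_pair[OF ab] jeffreys_kl_infimum[OF ab]
    jeffreys_dtv_unbounded[OF ab] jeffreys_kl_unbounded[OF ab]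
  by blast

end
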